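(* (Kleene proof principle) Let $\mathscr{S}$ be an expressivity situation and $x\colon X\to BX$ a $B$-coalgebra. Assume the chain $\top\sqsupseteq(x^*\circ\overline{B}^{\underline{\Omega},\tau})(\top)\sqsupseteq(x^*\circ\overline{B}^{\underline{\Omega},\tau})^2(\top)\sqsupseteq\cdots$ in $\mathcal{E}_X$ stabilizes after $\omega$ steps, i.e. $\bigwedge_{i<\omega}(x^*\circ\overline{B}^{\underline{\Omega},\tau})^i(\top)$ is a fixed point of $x^*\circ\overline{B}^{\underline{\Omega},\tau}$. If for each $i\in\mathbb{N}$ the set $\{[\![\varphi]\!]_x\mid\varphi\in L_{\mathscr{S}},\ \mathrm{depth}(\varphi)\le i\}\subseteq\mathcal{C}(X,\Omega)$ is an approximating family, then $\mathscr{S}$ is expressive for $x$, i.e. $\nu\bigl(x^*\circ\overline{B}^{\underline{\Omega},\tau}\bigr)\sqsupseteq\bigwedge_{\varphi\in L_{\mathscr{S}}}[\![\varphi]\!]_x^{*}\underline{\Omega}$.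
   Context: An expressivity situation $\mathscr{S}=(p,B,\Omega,\underline{\Omega},\Sigma,\Lambda,(f_\sigma),(\tau_\lambda))$ consists of: a fibration $p\colon\mathcal{E}\to\mathcal{C}$ whose fibers $\mathcal{E}_X$ are complete lattices (order $\sqsubseteq$, meets $\bigwedge$, top $\top$) with meet-preserving reindexing $f^*$; a functor $B\colon\mathcal{C}\to\mathcal{C}$; $\Omega\in\mathcal{C}$ with finite powers and $\underline{\Omega}\in\mathcal{E}$ above $\Omega$; a ranked alphabet $\Sigma$ with arrows $f_\sigma\colon\Omega^{\mathrm{rank}(\sigma)}\to\Omega$ each lifting to some $g_\sigma\colon\underline{\Omega}^{\mathrm{rank}(\sigma)}\to\underline{\Omega}$ with $pg_\sigma=f_\sigma$; a set $\Lambda$ and arrows $\tau_\lambda\colon B\Omega\to\Omega$. Formulas of $L_{\mathscr{S}}$: $\varphi::=\sigma(\varphi_1,\dots,\varphi_{\mathrm{rank}(\sigma)})\mid\heartsuit_\lambda\varphi$, with semantics $[\![\sigma(\varphi_1,\dots)]\!]_x=f_\sigma\circ\langle[\![\varphi_1]\!]_x,\dots\rangle$, $[\![\heartsuit_\lambda\varphi]\!]_x=\tau_\lambda\circ B[\![\varphi]\!]_x\circ x$; depth is defined by $\mathrm{depth}(\sigma(\varphi_1,\dots))=\max_j\mathrm{depth}(\varphi_j)$ (0 for constants) and $\mathrm{depth}(\heartsuit_\lambda\varphi)=\mathrm{depth}(\varphi)+1$. Codensity lifting: $\overline{B}^{\underline{\Omega},\tau}P=\bigwedge_{\lambda\in\Lambda,\,h\in\mathcal{E}(P,\underline{\Omega})}(\tau_\lambda\circ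 B(ph))^*\underline{\Omega}$; codensity bisimilarity is its greatest fixed point $\nu(x^*\circ\overline{B}^{\underline{\Omega},\tau})$ in $\mathcal{E}_X$. A subset $S\subseteq\mathcal{C}(X,\Omega)$ is an approximating family if for every $\mathcal{E}$-arrow $h\colon\bigwedge_{k\in S}k^*\underline{\Omega}\to\underline{\Omega}$ and every $\lambda\in\Lambda$, $\bigwedge_{k'\in S,\lambda'\in\Lambda}(\tau_{\lambda'}\circ Bk')^*\underline{\Omega}\sqsubseteq(\tau_\lambda\circ B(ph))^*\underline{\Omega}$. *)

theory Defs
  imports Main
begin

record ('o,'a) cat =
  Obj :: "'o set"
  Arr :: "'a set"
  Dom :: "'a \<Rightarrow> 'o"
  Cod :: "'a \<Rightarrow> 'o"
  Cmp :: "'a \<Rightarrow> 'a \<Rightarrow> 'a"   (* Cmp C g f = g \<circ> f *)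
  Idt :: "'o \<Rightarrow> 'a"

definition hom :: "('o,'a) cat \<Rightarrow> 'o \<Rightarrow> 'o \<Rightarrow> 'a set" where
  "hom C X Y = {f \<in> Arr C. Dom C f = X \<and> Cod C f = Y}"

definition category :: "('o,'a) cat \<Rightarrow> bool" where
  "category C \<longleftrightarrow>
     (\<forall>f\<in>Arr C. Dom C f \<in> Obj C \<and> Cod C f \<in> Obj C) \<and>
     (\<forall>X\<in>Obj C. Idt C X \<in> hom C X X) \<and>
     (\<forall>f g. f \<in> Arr C \<and> g \<in> Arr C \<and> Cod C f = Dom C g \<longrightarrow>
        Cmp C g f \<in> hom C (Dom C f) (Cod C g)) \<and>
     (\<forall>f\<in>Arr C. Cmp C f (Idt C (Dom C f)) = f \<and> Cmp C (Idt C (Cod C f)) f = f) \<and>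
     (\<forall>f g h. f \<in> Arr C \<and> g \<in> Arr C \<and> h \<in> Arr C \<and> Cod C f = Dom C g \<and> Cod C g = Dom C h
        \<longrightarrow> Cmp C h (Cmp C g f) = Cmp C (Cmp C h g) f)"

definition is_functor :: "('o,'a) cat \<Rightarrow> ('p,'b) cat \<Rightarrow> ('o \<Rightarrow> 'p) \<Rightarrow> ('a \<Rightarrow> 'b) \<Rightarrow> bool" where
  "is_functor C D Fo Fa \<longleftrightarrow>
     (\<forall>X\<in>Obj C. Fo X \<in> Obj D) \<and>
     (\<forall>f\<in>Arr C. Fa f \<in> hom D (Fo (Dom C f)) (Fo (Cod C f))) \<and>
     (\<forall>X\<in>Obj C. Fa (Idt C X) = Idt D (Fo X)) \<and>
     (\<forall>f g. f \<in> Arr C \<and> g \<in> Arr C \<and> Cod C f = Dom C g \<longrightarrow> Fa (Cmp C g f) = Cmp D (Fa g) (Fa f))"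

record ('o,'a,'eo,'ea) fibr =
  base :: "('o,'a) cat"
  tot  :: "('eo,'ea) cat"
  po   :: "'eo \<Rightarrow> 'o"
  pa   :: "'ea \<Rightarrow> 'a"

definition cartesian :: "('o,'a,'eo,'ea) fibr \<Rightarrow> 'ea \<Rightarrow> bool" where
  "cartesian F c \<longleftrightarrow> c \<in> Arr (tot F) \<and>
     (\<forall>g\<in>Arr (tot F). \<forall>u\<in>Arr (base F).
        Cod (tot F) g = Cod (tot F) c \<and> Cod (base F) u = Dom (base F) (pa F c) \<and>
        Dom (base F) u = Dom (base F) (pa F g) \<and> pa F g = Cmp (base F) (pa F c) u
        \<longrightarrow> (\<exists>!h. h \<in> Arr (tot F) \<and> Dom (tot F) h = Dom (tot F) g \<and> Cod (tot F) h = Dom (tot F) c \<and>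
                  pa F h = u \<and> Cmp (tot F) c h = g))"

definition fibration :: "('o,'a,'eo,'ea) fibr \<Rightarrow> bool" where
  "fibration F \<longleftrightarrow> category (base F) \<and> category (tot F) \<and> is_functor (tot F) (base F) (po F) (pa F) \<and>
     (\<forall>Q\<in>Obj (tot F). \<forall>u\<in>Arr (base F). Cod (base F) u = po F Q \<longrightarrow>
        (\<exists>c. cartesian F c \<and> Cod (tot F) c = Q \<and> pa F c = u))"

definition fibre :: "('o,'a,'eo,'ea) fibr \<Rightarrow> 'o \<Rightarrow> 'eo set" where
  "fibre F X = {P \<in> Obj (tot F). po F P = X}"

definition fle :: "('o,'a,'eo,'ea) fibr \<Rightarrow> 'o \<Rightarrow> 'eo \<Rightarrow> 'eo \<Rightarrow> bool" where
  "fle F X P Q \<longleftrightarrow> P \<in> fibre F X \<and> Q \<in> fibre F X \<and>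
     (\<exists>h\<in>Arr (tot F). Dom (tot F) h = P \<and> Cod (tot F) h = Q \<and> pa F h = Idt (base F) X)"

definition is_fmeet :: "('o,'a,'eo,'ea) fibr \<Rightarrow> 'o \<Rightarrow> 'eo set \<Rightarrow> 'eo \<Rightarrow> bool" where
  "is_fmeet F X S m \<longleftrightarrow> m \<in> fibre F X \<and> (\<forall>Q\<in>S. fle F X m Q) \<and>
     (\<forall>m'\<in>fibre F X. (\<forall>Q\<in>S. fle F X m' Q) \<longrightarrow> fle F X m' m)"

definition fmeet :: "('o,'a,'eo,'ea) fibr \<Rightarrow> 'o \<Rightarrow> 'eo set \<Rightarrow> 'eo" where
  "fmeet F X S = (THE m. is_fmeet F X S m)"

definition ftop :: "('o,'a,'eo,'ea) fibr \<Rightarrow> 'o \<Rightarrow> 'eo" where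
  "ftop F X = fmeet F X {}"

definition clat_fibres :: "('o,'a,'eo,'ea) fibr \<Rightarrow> bool" where
  "clat_fibres F \<longleftrightarrow> (\<forall>X\<in>Obj (base F).
     (\<forall>P Q. fle F X P Q \<and> fle F X Q P \<longrightarrow> P = Q) \<and>
     (\<forall>h h'. h \<in> Arr (tot F) \<and> h' \<in> Arr (tot F) \<and> pa F h = Idt (base F) X \<and> pa F h' = Idt (base F) X \<and>
        Dom (tot F) h = Dom (tot F) h' \<and> Cod (tot F) h = Cod (tot F) h' \<longrightarrow> h = h') \<and>
     (\<forall>S. S \<subseteq> fibre F X \<longrightarrow> (\<exists>m. is_fmeet F X S m)))"

definition reindex :: "('o,'a,'eo,'ea) fibr \<Rightarrow> 'a \<Rightarrow> 'eo \<Rightarrow> 'eo" where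
  "reindex F u Q = (THE P. \<exists>c. cartesian F c \<and> Cod (tot F) c = Q \<and> pa F c = u \<and> Dom (tot F) c = P)"

definition meet_preserving_reindex :: "('o,'a,'eo,'ea) fibr \<Rightarrow> bool" where
  "meet_preserving_reindex F \<longleftrightarrow> (\<forall>u\<in>Arr (base F). \<forall>S. S \<subseteq> fibre F (Cod (base F) u) \<longrightarrow>
     reindex F u (fmeet F (Cod (base F) u) S) = fmeet F (Dom (base F) u) (reindex F u ` S))"

definition is_power :: "('o,'a) cat \<Rightarrow> 'o \<Rightarrow> nat \<Rightarrow> 'o \<Rightarrow> (nat \<Rightarrow> 'a) \<Rightarrow> bool" where
  "is_power C Om n Pn prj \<longleftrightarrow> Pn \<in> Obj C \<and> (\<forall>i<n. prj i \<in> hom C Pn Om) \<and>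
     (\<forall>X\<in>Obj C. \<forall>ks. (\<forall>i<n. ks i \<in> hom C X Om) \<longrightarrow>
        (\<exists>!h. h \<in> hom C X Pn \<and> (\<forall>i<n. Cmp C (prj i) h = ks i)))"

definition tuple :: "('o,'a) cat \<Rightarrow> 'o \<Rightarrow> (nat \<Rightarrow> 'a) \<Rightarrow> nat \<Rightarrow> 'o \<Rightarrow> (nat \<Rightarrow> 'a) \<Rightarrow> 'a" where
  "tuple C Pn prj n X ks = (THE h. h \<in> hom C X Pn \<and> (\<forall>i<n. Cmp C (prj i) h = ks i))"

record ('o,'a,'eo,'ea,'s,'l) situation =
  fb   :: "('o,'a,'eo,'ea) fibr"
  Bo   :: "'o \<Rightarrow> 'o"
  Ba   :: "'a \<Rightarrow> 'a"
  Om   :: "'o"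
  Omu  :: "'eo"
  opow :: "nat \<Rightarrow> 'o"
  prj  :: "nat \<Rightarrow> nat \<Rightarrow> 'a"
  Sig  :: "'s set"
  rank :: "'s \<Rightarrow> nat"
  fsig :: "'s \<Rightarrow> 'a"
  Lam  :: "'l set"
  tau  :: "'l \<Rightarrow> 'a"

definition OmuPow :: "('o,'a,'eo,'ea,'s,'l) situation \<Rightarrow> nat \<Rightarrow> 'eo" where
  "OmuPow S n = fmeet (fb S) (opow S n) ((\<lambda>i. reindex (fb S) (prj S n i) (Omu S)) ` {..<n})"

definition expressivity_situation :: "('o,'a,'eo,'ea,'s,'l) situation \<Rightarrow> bool" where
  "expressivity_situation S \<longleftrightarrow>
     fibration (fb S) \<and> clat_fibres (fb S) \<and> meet_preserving_reindex (fb S) \<and>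
     is_functor (base (fb S)) (base (fb S)) (Bo S) (Ba S) \<and>
     Om S \<in> Obj (base (fb S)) \<and> Omu S \<in> Obj (tot (fb S)) \<and> po (fb S) (Omu S) = Om S \<and>
     (\<forall>n. is_power (base (fb S)) (Om S) n (opow S n) (prj S n)) \<and>
     (\<forall>\<sigma>\<in>Sig S. fsig S \<sigma> \<in> hom (base (fb S)) (opow S (rank S \<sigma>)) (Om S) \<and>
        (\<exists>g\<in>Arr (tot (fb S)). Dom (tot (fb S)) g = OmuPow S (rank S \<sigma>) \<and>
            Cod (tot (fb S)) g = Omu S \<and> pa (fb S) g = fsig S \<sigma>)) \<and>
     (\<forall>l\<in>Lam S. tau S l \<in> hom (base (fb S)) (Bo S (Om S)) (Om S))"

datatype ('s,'l) form = Op 's "('s,'l) form list" | Mod 'l "('s,'l) form"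

fun wf_form :: "('o,'a,'eo,'ea,'s,'l) situation \<Rightarrow> ('s,'l) form \<Rightarrow> bool" where
  "wf_form S (Op s fs) = (s \<in> Sig S \<and> length fs = rank S s \<and> (\<forall>f\<in>set fs. wf_form S f))"
| "wf_form S (Mod l f) = (l \<in> Lam S \<and> wf_form S f)"

fun depth :: "('s,'l) form \<Rightarrow> nat" where
  "depth (Op s fs) = foldr max (map depth fs) 0"
| "depth (Mod l f) = Suc (depth f)"

fun sem :: "('o,'a,'eo,'ea,'s,'l) situation \<Rightarrow> 'a \<Rightarrow> ('s,'l) form \<Rightarrow> 'a" where
  "sem S x (Op s fs) = Cmp (base (fb S)) (fsig S s)
      (tuple (base (fb S)) (opow S (rank S s)) (prj S (rank S s)) (rank S s)
         (Dom (base (fb S)) x) (\<lambda>i. map (sem S x) fs ! i))"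
| "sem S x (Mod l f) = Cmp (base (fb S)) (tau S l) (Cmp (base (fb S)) (Ba S (sem S x f)) x)"

definition codensity_lifting :: "('o,'a,'eo,'ea,'s,'l) situation \<Rightarrow> 'eo \<Rightarrow> 'eo" where
  "codensity_lifting S P = fmeet (fb S) (Bo S (po (fb S) P))
     {reindex (fb S) (Cmp (base (fb S)) (tau S l) (Ba S (pa (fb S) h))) (Omu S) | l h.
        l \<in> Lam S \<and> h \<in> Arr (tot (fb S)) \<and> Dom (tot (fb S)) h = P \<and> Cod (tot (fb S)) h = Omu S}"

definition Phi :: "('o,'a,'eo,'ea,'s,'l) situation \<Rightarrow> 'a \<Rightarrow> 'eo \<Rightarrow> 'eo" where
  "Phi S x P = reindex (fb S) x (codensity_lifting S P)"

definition codensity_bisim :: "('o,'a,'eo,'ea,'s,'l) situation \<Rightarrow> 'o \<Rightarrow> 'a \<Rightarrow> 'eo" where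
  "codensity_bisim S X x = (THE P. P \<in> fibre (fb S) X \<and> Phi S x P = P \<and>
     (\<forall>Q\<in>fibre (fb S) X. Phi S x Q = Q \<longrightarrow> fle (fb S) X Q P))"

definition approximating :: "('o,'a,'eo,'ea,'s,'l) situation \<Rightarrow> 'o \<Rightarrow> 'a set \<Rightarrow> bool" where
  "approximating S X K \<longleftrightarrow> K \<subseteq> hom (base (fb S)) X (Om S) \<and>
     (\<forall>h\<in>Arr (tot (fb S)).
        Dom (tot (fb S)) h = fmeet (fb S) X ((\<lambda>k. reindex (fb S) k (Omu S)) ` K) \<and>
        Cod (tot (fb S)) h = Omu S \<longrightarrow>
        (\<forall>l\<in>Lam S. fle (fb S) (Bo S X)
           (fmeet (fb S) (Bo S X)
              {reindex (fb S) (Cmp (base (fb S)) (tau S l') (Ba S k')) (Omu S) | k' l'. k' \<in> K \<and> l' \<in> Lam S})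
           (reindex (fb S) (Cmp (base (fb S)) (tau S l) (Ba S (pa (fb S) h))) (Omu S))))"

end

theory Submission
  imports Defs
begin

(* Let T i be the i-th iterate of x^* o B-bar applied to top, and M i the meet of the
   predicates [[phi]]^* Omega-bar over formulas of depth at most i.  By induction M i is below
   T i: a test h : T i -> Omega-bar precomposes to a test on M i, so by approximation its
   modal predicate (tau_l o B(p h))^* Omega-bar lies above the meet of the predicates
   (tau_l' o B[[phi]])^* Omega-bar with depth phi <= i.  Reindexing along x preserves meets and
   composes, so x^* of that meet lies above M (i+1), one of whose conjuncts is
   [[Mod l' phi]]^* Omega-bar.  Hence the meet over all formulas is below every T i, hence below
   their meet, which by stabilisation is the greatest fixed point. *)

lemma category_Dom_Obj: "category C \<Longrightarrow> f \<in> hom C X Y \<Longrightarrow> X \<in> Obj C"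
  unfolding category_def hom_def by blast

lemma category_Idt_hom: "category C \<Longrightarrow> X \<in> Obj C \<Longrightarrow> Idt C X \<in> hom C X X"
  unfolding category_def by blast

lemma category_Cmp_hom:
  "category C \<Longrightarrow> f \<in> hom C X Y \<Longrightarrow> g \<in> hom C Y Z \<Longrightarrow> Cmp C g f \<in> hom C X Z"
  unfolding category_def hom_def by auto

lemma category_Cmp_Idt_right: "category C \<Longrightarrow> f \<in> hom C X Y \<Longrightarrow> Cmp C f (Idt C X) = f"
  unfolding category_def hom_def by auto

lemma category_Cmp_Idt_left: "category C \<Longrightarrow> f \<in> hom C X Y \<Longrightarrow> Cmp C (Idt C Y) f = f"
  unfolding category_def hom_def by auto

lemma category_Cmp_assoc:
  "category C \<Longrightarrow> f \<in> hom C X Y \<Longrightarrow> g \<in> hom C Y Z \<Longrightarrow> h \<in> hom C Z W \<Longrightarrow>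
    Cmp C h (Cmp C g f) = Cmp C (Cmp C h g) f"
  unfolding category_def hom_def by auto

lemma functor_hom: "is_functor C D Fo Fa \<Longrightarrow> f \<in> hom C X Y \<Longrightarrow> Fa f \<in> hom D (Fo X) (Fo Y)"
  unfolding is_functor_def hom_def by auto

lemma functor_Obj: "is_functor C D Fo Fa \<Longrightarrow> X \<in> Obj C \<Longrightarrow> Fo X \<in> Obj D"
  unfolding is_functor_def by blast

lemma functor_Idt: "is_functor C D Fo Fa \<Longrightarrow> X \<in> Obj C \<Longrightarrow> Fa (Idt C X) = Idt D (Fo X)"
  unfolding is_functor_def by blast

lemma functor_Cmp:
  "is_functor C D Fo Fa \<Longrightarrow> f \<in> hom C X Y \<Longrightarrow> g \<in> hom C Y Z \<Longrightarrow> Fa (Cmp C g f) = Cmp D (Fa g) (Fa f)"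
  unfolding is_functor_def hom_def by auto

locale clat_fibration =
  fixes F :: "('o,'a,'eo,'ea) fibr"
  assumes fibration: "fibration F"
    and clat_fibres: "clat_fibres F"
    and meet_preserving: "meet_preserving_reindex F"
begin

lemma category_base: "category (base F)"
  and category_tot: "category (tot F)"
  and functor_p: "is_functor (tot F) (base F) (po F) (pa F)"
  using fibration unfolding fibration_def by blast+

lemma pa_hom: "h \<in> hom (tot F) P Q \<Longrightarrow> pa F h \<in> hom (base F) (po F P) (po F Q)"
  using functor_hom[OF functor_p] .

lemma fibre_base_Obj: "P \<in> fibre F X \<Longrightarrow> X \<in> Obj (base F)"
  unfolding fibre_def using functor_Obj[OF functor_p] by blast

lemma fle_fibre: "fle F X P Q \<Longrightarrow> P \<in> fibre F X \<and> Q \<in> fibre F X"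
  unfolding fle_def by blast

lemma fleI: "P \<in> fibre F X \<Longrightarrow> Q \<in> fibre F X \<Longrightarrow> h \<in> hom (tot F) P Q \<Longrightarrow> pa F h = Idt (base F) X
    \<Longrightarrow> fle F X P Q"
  unfolding fle_def hom_def by blast

lemma fleE:
  assumes "fle F X P Q"
  obtains h where "h \<in> hom (tot F) P Q" "pa F h = Idt (base F) X"
  using assms unfolding fle_def hom_def by blast

lemma fle_refl: "P \<in> fibre F X \<Longrightarrow> fle F X P P"
  using category_Idt_hom[OF category_tot] functor_Idt[OF functor_p]
  by (intro fleI) (auto simp: fibre_def)

lemma fle_trans:
  assumes PQ: "fle F X P Q" and QR: "fle F X Q R"
  shows "fle F X P R"
proof -
  obtain h where h: "h \<in> hom (tot F) P Q" "pa F h = Idt (base F) X" using PQ by (rule fleE)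
  obtain g where g: "g \<in> hom (tot F) Q R" "pa F g = Idt (base F) X" using QR by (rule fleE)
  have X: "X \<in> Obj (base F)" using fle_fibre[OF PQ] fibre_base_Obj by blast
  have "pa F (Cmp (tot F) g h) = Cmp (base F) (Idt (base F) X) (Idt (base F) X)"
    using functor_Cmp[OF functor_p h(1) g(1)] g h by simp
  also have "\<dots> = Idt (base F) X"
    using category_Cmp_Idt_left[OF category_base category_Idt_hom[OF category_base X]] .
  finally show ?thesis
    using fle_fibre[OF PQ] fle_fibre[OF QR] category_Cmp_hom[OF category_tot h(1) g(1)]
    by (intro fleI) auto
qed

lemma fle_antisym: "fle F X P Q \<Longrightarrow> fle F X Q P \<Longrightarrow> P = Q"
  using clat_fibres fle_fibre fibre_base_Obj unfolding clat_fibres_def by blast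

lemma fle_precompose:
  assumes PQ: "fle F X P Q" and h: "h \<in> hom (tot F) Q R"
  shows "\<exists>h'. h' \<in> hom (tot F) P R \<and> pa F h' = pa F h"
proof -
  obtain v where v: "v \<in> hom (tot F) P Q" "pa F v = Idt (base F) X" using PQ by (rule fleE)
  have "po F Q = X" using fle_fibre[OF PQ] unfolding fibre_def by blast
  then have "pa F (Cmp (tot F) h v) = pa F h"
    using functor_Cmp[OF functor_p v(1) h] v(2) pa_hom[OF h]
      category_Cmp_Idt_right[OF category_base] by simp
  with category_Cmp_hom[OF category_tot v(1) h] show ?thesis by blast
qed

lemma fmeet_is:
  assumes "X \<in> Obj (base F)" "A \<subseteq> fibre F X"
  shows "is_fmeet F X A (fmeet F X A)"
proof -
  obtain m where m: "is_fmeet F X A m" using assms clat_fibres unfolding clat_fibres_def by blast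
  moreover have "m' = m" if "is_fmeet F X A m'" for m'
    using that m fle_antisym unfolding is_fmeet_def by blast
  ultimately show ?thesis unfolding fmeet_def by (rule theI)
qed

lemma fmeet_fibre: "X \<in> Obj (base F) \<Longrightarrow> A \<subseteq> fibre F X \<Longrightarrow> fmeet F X A \<in> fibre F X"
  using fmeet_is unfolding is_fmeet_def by blast

lemma fmeet_lower: "X \<in> Obj (base F) \<Longrightarrow> A \<subseteq> fibre F X \<Longrightarrow> Q \<in> A \<Longrightarrow> fle F X (fmeet F X A) Q"
  using fmeet_is unfolding is_fmeet_def by blast

lemma fmeet_greatest:
  "X \<in> Obj (base F) \<Longrightarrow> A \<subseteq> fibre F X \<Longrightarrow> P \<in> fibre F X \<Longrightarrow> (\<And>Q. Q \<in> A \<Longrightarrow> fle F X P Q)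
    \<Longrightarrow> fle F X P (fmeet F X A)"
  using fmeet_is unfolding is_fmeet_def by blast

lemma fmeet_antimono:
  "X \<in> Obj (base F) \<Longrightarrow> A \<subseteq> A' \<Longrightarrow> A' \<subseteq> fibre F X \<Longrightarrow> fle F X (fmeet F X A') (fmeet F X A)"
  by (meson fmeet_fibre fmeet_greatest fmeet_lower subset_trans subsetD)

lemma ftop_fibre: "X \<in> Obj (base F) \<Longrightarrow> ftop F X \<in> fibre F X"
  unfolding ftop_def by (simp add: fmeet_fibre)

lemma fle_ftop: "P \<in> fibre F X \<Longrightarrow> fle F X P (ftop F X)"
  unfolding ftop_def by (rule fmeet_greatest[OF fibre_base_Obj]) auto

lemma Dom_fibre_of_hom:
  "h \<in> hom (tot F) P Q \<Longrightarrow> pa F h \<in> hom (base F) X Y \<Longrightarrow> P \<in> fibre F X"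
  using pa_hom category_Dom_Obj[OF category_tot] unfolding fibre_def hom_def by fastforce

lemma cartesian_factor:
  assumes c: "cartesian F c" "c \<in> hom (tot F) P Q"
    and g: "g \<in> hom (tot F) R Q" and u: "u \<in> hom (base F) (po F R) (po F P)"
    and factor: "pa F g = Cmp (base F) (pa F c) u"
  shows "\<exists>h. h \<in> hom (tot F) R P \<and> pa F h = u"
proof -
  have "Cod (base F) u = Dom (base F) (pa F c)" "Dom (base F) u = Dom (base F) (pa F g)"
    using u pa_hom[OF c(2)] pa_hom[OF g] unfolding hom_def by auto
  moreover have "g \<in> Arr (tot F)" "u \<in> Arr (base F)" "Cod (tot F) g = Cod (tot F) c"
    using c(2) g u unfolding hom_def by auto
  ultimately have "\<exists>!h. h \<in> Arr (tot F) \<and> Dom (tot F) h = Dom (tot F) g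
      \<and> Cod (tot F) h = Dom (tot F) c \<and> pa F h = u \<and> Cmp (tot F) c h = g"
    using c(1) factor unfolding cartesian_def by blast
  then show ?thesis using c(2) g unfolding hom_def by auto
qed

lemma cartesian_vertical_factor:
  assumes c: "cartesian F c" "c \<in> hom (tot F) P Q" "pa F c = u"
    and g: "g \<in> hom (tot F) R Q" "pa F g = u" and R: "R \<in> fibre F X" and u: "u \<in> hom (base F) X Y"
  shows "fle F X R P"
proof -
  have X: "X \<in> Obj (base F)" using R by (rule fibre_base_Obj)
  have P: "P \<in> fibre F X" using Dom_fibre_of_hom c(2,3) u by blast
  have "pa F g = Cmp (base F) (pa F c) (Idt (base F) X)"
    using c(3) g(2) category_Cmp_Idt_right[OF category_base u] by simp
  moreover have "Idt (base F) X \<in> hom (base F) (po F R) (po F P)"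
    using category_Idt_hom[OF category_base X] R P unfolding fibre_def by auto
  ultimately obtain h where "h \<in> hom (tot F) R P" "pa F h = Idt (base F) X"
    using cartesian_factor[OF c(1,2) g(1)] by blast
  with R P show ?thesis by (intro fleI)
qed

lemma reindex_cartesian:
  assumes u: "u \<in> hom (base F) X Y" and Q: "Q \<in> fibre F Y"
  shows "\<exists>c. cartesian F c \<and> c \<in> hom (tot F) (reindex F u Q) Q \<and> pa F c = u"
proof -
  obtain c where c: "cartesian F c" "Cod (tot F) c = Q" "pa F c = u"
    using fibration u Q unfolding fibration_def fibre_def hom_def by force
  define P where "P = Dom (tot F) c"
  have c_hom: "c \<in> hom (tot F) P Q" using c unfolding P_def cartesian_def hom_def by blast
  have P: "P \<in> fibre F X" using Dom_fibre_of_hom c_hom c(3) u by blast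
  have "P' = P"
    if "cartesian F c'" "Cod (tot F) c' = Q" "pa F c' = u" "Dom (tot F) c' = P'" for c' P'
  proof -
    have c'_hom: "c' \<in> hom (tot F) P' Q" using that unfolding cartesian_def hom_def by blast
    have "P' \<in> fibre F X" using Dom_fibre_of_hom c'_hom that(3) u by blast
    then show ?thesis
      using cartesian_vertical_factor[OF c(1) c_hom c(3) c'_hom that(3) _ u]
        cartesian_vertical_factor[OF that(1) c'_hom that(3) c_hom c(3) P u] fle_antisym by blast
  qed
  then have "reindex F u Q = P"
    unfolding reindex_def using c P_def by (intro the_equality) blast+
  then show ?thesis using c c_hom by blast
qed

lemma reindex_fibre:
  assumes u: "u \<in> hom (base F) X Y" and Q: "Q \<in> fibre F Y"
  shows "reindex F u Q \<in> fibre F X"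
proof -
  obtain c where "c \<in> hom (tot F) (reindex F u Q) Q" "pa F c = u"
    using reindex_cartesian[OF u Q] by blast
  with u show ?thesis using Dom_fibre_of_hom by blast
qed

lemma fle_reindexI:
  assumes g: "g \<in> hom (tot F) R Q" "pa F g = u" and R: "R \<in> fibre F X"
    and u: "u \<in> hom (base F) X Y" and Q: "Q \<in> fibre F Y"
  shows "fle F X R (reindex F u Q)"
  using reindex_cartesian[OF u Q] cartesian_vertical_factor[OF _ _ _ g R u] by blast

lemma reindex_mono:
  assumes u: "u \<in> hom (base F) X Y" and PQ: "fle F Y P Q"
  shows "fle F X (reindex F u P) (reindex F u Q)"
proof -
  obtain v where v: "v \<in> hom (tot F) P Q" "pa F v = Idt (base F) Y" using PQ by (rule fleE)
  have P: "P \<in> fibre F Y" and Q: "Q \<in> fibre F Y" using fle_fibre[OF PQ] by auto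
  obtain c where c: "c \<in> hom (tot F) (reindex F u P) P" "pa F c = u"
    using reindex_cartesian[OF u P] by blast
  have "pa F (Cmp (tot F) v c) = u"
    using functor_Cmp[OF functor_p c(1) v(1)] c(2) v(2) category_Cmp_Idt_left[OF category_base u]
    by simp
  then show ?thesis
    using fle_reindexI[OF category_Cmp_hom[OF category_tot c(1) v(1)] _ reindex_fibre[OF u P] u Q]
    by blast
qed

lemma reindex_Cmp:
  assumes f: "f \<in> hom (base F) X Y" and g: "g \<in> hom (base F) Y Z" and Q: "Q \<in> fibre F Z"
  shows "reindex F (Cmp (base F) g f) Q = reindex F f (reindex F g Q)"
proof (rule fle_antisym)
  have gf: "Cmp (base F) g f \<in> hom (base F) X Z" using category_Cmp_hom[OF category_base f g] .
  have gQ: "reindex F g Q \<in> fibre F Y" using reindex_fibre[OF g Q] .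
  obtain c where c: "cartesian F c" "c \<in> hom (tot F) (reindex F g Q) Q" "pa F c = g"
    using reindex_cartesian[OF g Q] by blast
  obtain d where d: "d \<in> hom (tot F) (reindex F (Cmp (base F) g f) Q) Q"
    "pa F d = Cmp (base F) g f"
    using reindex_cartesian[OF gf Q] by blast
  obtain e where e: "e \<in> hom (tot F) (reindex F f (reindex F g Q)) (reindex F g Q)" "pa F e = f"
    using reindex_cartesian[OF f gQ] by blast
  have "f \<in> hom (base F) (po F (reindex F (Cmp (base F) g f) Q)) (po F (reindex F g Q))"
    using f reindex_fibre[OF gf Q] gQ unfolding fibre_def by simp
  then obtain h where "h \<in> hom (tot F) (reindex F (Cmp (base F) g f) Q) (reindex F g Q)"
    "pa F h = f"
    using cartesian_factor[OF c(1,2) d(1)] d(2) c(3) by blast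
  then show "fle F X (reindex F (Cmp (base F) g f) Q) (reindex F f (reindex F g Q))"
    using fle_reindexI reindex_fibre[OF gf Q] f gQ by blast
  have "pa F (Cmp (tot F) c e) = Cmp (base F) g f"
    using functor_Cmp[OF functor_p e(1) c(2)] c(3) e(2) by simp
  then show "fle F X (reindex F f (reindex F g Q)) (reindex F (Cmp (base F) g f) Q)"
    using fle_reindexI[OF category_Cmp_hom[OF category_tot e(1) c(2)] _ reindex_fibre[OF f gQ] gf]
      Q by blast
qed

lemma reindex_fmeet:
  "u \<in> hom (base F) X Y \<Longrightarrow> A \<subseteq> fibre F Y \<Longrightarrow> reindex F u (fmeet F Y A) = fmeet F X (reindex F u ` A)"
  using meet_preserving unfolding meet_preserving_reindex_def hom_def by blast

end

definition modal_pred :: "('o,'a,'eo,'ea,'s,'l) situation \<Rightarrow> 'l \<Rightarrow> 'a \<Rightarrow> 'eo" where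
  "modal_pred S l k = reindex (fb S) (Cmp (base (fb S)) (tau S l) (Ba S k)) (Omu S)"

definition codensity_tests :: "('o,'a,'eo,'ea,'s,'l) situation \<Rightarrow> 'eo \<Rightarrow> 'eo set" where
  "codensity_tests S P =
     {modal_pred S l (pa (fb S) h) | l h. l \<in> Lam S \<and> h \<in> hom (tot (fb S)) P (Omu S)}"

lemma codensity_lifting_eq:
  "codensity_lifting S P = fmeet (fb S) (Bo S (po (fb S) P)) (codensity_tests S P)"
  unfolding codensity_lifting_def codensity_tests_def modal_pred_def hom_def by simp

definition family_pred :: "('o,'a,'eo,'ea,'s,'l) situation \<Rightarrow> 'o \<Rightarrow> 'a set \<Rightarrow> 'eo" where
  "family_pred S X K = fmeet (fb S) X ((\<lambda>k. reindex (fb S) k (Omu S)) ` K)"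

definition modal_tests :: "('o,'a,'eo,'ea,'s,'l) situation \<Rightarrow> 'a set \<Rightarrow> 'eo set" where
  "modal_tests S K = {modal_pred S l k | k l. k \<in> K \<and> l \<in> Lam S}"

lemma approximating_hom: "approximating S X K \<Longrightarrow> K \<subseteq> hom (base (fb S)) X (Om S)"
  unfolding approximating_def by blast

lemma approximatingD:
  "approximating S X K \<Longrightarrow> h \<in> hom (tot (fb S)) (family_pred S X K) (Omu S) \<Longrightarrow> l \<in> Lam S \<Longrightarrow>
    fle (fb S) (Bo S X) (fmeet (fb S) (Bo S X) (modal_tests S K)) (modal_pred S l (pa (fb S) h))"
  unfolding approximating_def family_pred_def modal_tests_def modal_pred_def hom_def by blast

definition semantics_upto :: "('o,'a,'eo,'ea,'s,'l) situation \<Rightarrow> 'a \<Rightarrow> nat \<Rightarrow> 'a set" where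
  "semantics_upto S x i = {sem S x \<phi> | \<phi>. wf_form S \<phi> \<and> depth \<phi> \<le> i}"

lemma sem_Mod_semantics_upto:
  assumes "k \<in> semantics_upto S x i" "l \<in> Lam S"
  shows "Cmp (base (fb S)) (tau S l) (Cmp (base (fb S)) (Ba S k) x) \<in> semantics_upto S x (Suc i)"
proof -
  obtain \<phi> where "k = sem S x \<phi>" "wf_form S \<phi>" "depth \<phi> \<le> i"
    using assms(1) unfolding semantics_upto_def by blast
  then show ?thesis
    using assms(2) unfolding semantics_upto_def by (intro CollectI exI[of _ "Mod l \<phi>"]) simp
qed

lemma semantics_eq_UN_semantics_upto:
  "{sem S x \<phi> | \<phi>. wf_form S \<phi>} = (\<Union>i. semantics_upto S x i)"
proof (intro equalityI subsetI)
  fix k assume "k \<in> {sem S x \<phi> | \<phi>. wf_form S \<phi>}"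
  then obtain \<phi> where "k = sem S x \<phi>" "wf_form S \<phi>" by blast
  then have "k \<in> semantics_upto S x (depth \<phi>)" unfolding semantics_upto_def by blast
  then show "k \<in> (\<Union>i. semantics_upto S x i)" by blast
qed (unfold semantics_upto_def, blast)

locale expr_situation =
  fixes S :: "('o,'a,'eo,'ea,'s,'l) situation"
  assumes expressivity_situation: "expressivity_situation S"
begin

sublocale clat_fibration "fb S"
  using expressivity_situation unfolding expressivity_situation_def clat_fibration_def by blast

lemma B_functor: "is_functor (base (fb S)) (base (fb S)) (Bo S) (Ba S)"
  using expressivity_situation unfolding expressivity_situation_def by blast

lemma Omu_fibre: "Omu S \<in> fibre (fb S) (Om S)"
  using expressivity_situation unfolding expressivity_situation_def fibre_def by blast

lemma tau_hom: "l \<in> Lam S \<Longrightarrow> tau S l \<in> hom (base (fb S)) (Bo S (Om S)) (Om S)"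
  using expressivity_situation unfolding expressivity_situation_def by blast

lemma modal_test_hom:
  "k \<in> hom (base (fb S)) Y (Om S) \<Longrightarrow> l \<in> Lam S \<Longrightarrow>
    Cmp (base (fb S)) (tau S l) (Ba S k) \<in> hom (base (fb S)) (Bo S Y) (Om S)"
  using category_Cmp_hom[OF category_base functor_hom[OF B_functor] tau_hom] .

lemma reindex_Omu_fibre:
  "k \<in> hom (base (fb S)) Y (Om S) \<Longrightarrow> reindex (fb S) k (Omu S) \<in> fibre (fb S) Y"
  using reindex_fibre Omu_fibre by blast

lemma modal_pred_fibre:
  "k \<in> hom (base (fb S)) Y (Om S) \<Longrightarrow> l \<in> Lam S \<Longrightarrow> modal_pred S l k \<in> fibre (fb S) (Bo S Y)"
  unfolding modal_pred_def using reindex_Omu_fibre modal_test_hom by blast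

lemma codensity_tests_fibre:
  assumes P: "P \<in> fibre (fb S) Y"
  shows "codensity_tests S P \<subseteq> fibre (fb S) (Bo S Y)"
proof
  fix R assume "R \<in> codensity_tests S P"
  then obtain l h where R: "R = modal_pred S l (pa (fb S) h)"
    and l: "l \<in> Lam S" and h: "h \<in> hom (tot (fb S)) P (Omu S)"
    unfolding codensity_tests_def by blast
  have "pa (fb S) h \<in> hom (base (fb S)) Y (Om S)"
    using pa_hom[OF h] P Omu_fibre unfolding fibre_def by simp
  then show "R \<in> fibre (fb S) (Bo S Y)" using R modal_pred_fibre l by blast
qed

lemma codensity_tests_antimono:
  assumes "fle (fb S) Y P Q"
  shows "codensity_tests S Q \<subseteq> codensity_tests S P"
proof
  fix R assume "R \<in> codensity_tests S Q"
  then obtain l h where R: "R = modal_pred S l (pa (fb S) h)"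
    and l: "l \<in> Lam S" and h: "h \<in> hom (tot (fb S)) Q (Omu S)"
    unfolding codensity_tests_def by blast
  obtain h' where h': "h' \<in> hom (tot (fb S)) P (Omu S)" "pa (fb S) h' = pa (fb S) h"
    using fle_precompose[OF assms h] by blast
  show "R \<in> codensity_tests S P"
    unfolding codensity_tests_def using R l h' by (intro CollectI exI[of _ l] exI[of _ h']) simp
qed

lemma codensity_lifting_fibre:
  assumes P: "P \<in> fibre (fb S) Y"
  shows "codensity_lifting S P \<in> fibre (fb S) (Bo S Y)"
proof -
  have "Bo S Y \<in> Obj (base (fb S))" using fibre_base_Obj[OF P] functor_Obj[OF B_functor] by blast
  with P show ?thesis
    unfolding codensity_lifting_eq fibre_def using fmeet_fibre codensity_tests_fibre[OF P]
    by (simp add: fibre_def)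
qed

lemma codensity_lifting_mono:
  assumes PQ: "fle (fb S) Y P Q"
  shows "fle (fb S) (Bo S Y) (codensity_lifting S P) (codensity_lifting S Q)"
proof -
  have P: "P \<in> fibre (fb S) Y" and "po (fb S) P = Y" "po (fb S) Q = Y"
    using fle_fibre[OF PQ] unfolding fibre_def by auto
  moreover have "Bo S Y \<in> Obj (base (fb S))"
    using fibre_base_Obj[OF P] functor_Obj[OF B_functor] by blast
  ultimately show ?thesis
    unfolding codensity_lifting_eq
    using fmeet_antimono[OF _ codensity_tests_antimono[OF PQ] codensity_tests_fibre[OF P]] by simp
qed

end

locale expr_coalgebra = expr_situation +
  fixes X :: 'o and x :: 'a
  assumes coalgebra: "x \<in> hom (base (fb S)) X (Bo S X)"
begin

lemma X_Obj: "X \<in> Obj (base (fb S))"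
  using category_Dom_Obj[OF category_base coalgebra] .

lemma Phi_fibre: "P \<in> fibre (fb S) X \<Longrightarrow> Phi S x P \<in> fibre (fb S) X"
  unfolding Phi_def using reindex_fibre[OF coalgebra] codensity_lifting_fibre by blast

lemma Phi_mono: "fle (fb S) X P Q \<Longrightarrow> fle (fb S) X (Phi S x P) (Phi S x Q)"
  unfolding Phi_def using reindex_mono[OF coalgebra] codensity_lifting_mono by blast

lemma Phi_iterate_fibre: "(Phi S x ^^ i) (ftop (fb S) X) \<in> fibre (fb S) X"
  by (induction i) (simp_all add: ftop_fibre[OF X_Obj] Phi_fibre)

lemma postfixpoint_le_Phi_iterate:
  assumes "fle (fb S) X Q (Phi S x Q)"
  shows "fle (fb S) X Q ((Phi S x ^^ i) (ftop (fb S) X))"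
proof (induction i)
  case 0
  show ?case using fle_ftop fle_fibre[OF assms] by simp
next
  case (Suc i)
  then show ?case using fle_trans[OF assms Phi_mono] by simp
qed

lemma codensity_bisim_eqI:
  assumes P: "P \<in> fibre (fb S) X" "Phi S x P = P"
    and greatest: "\<And>Q. Q \<in> fibre (fb S) X \<Longrightarrow> Phi S x Q = Q \<Longrightarrow> fle (fb S) X Q P"
  shows "codensity_bisim S X x = P"
  unfolding codensity_bisim_def
proof (rule the_equality)
  fix P' assume "P' \<in> fibre (fb S) X \<and> Phi S x P' = P' \<and>
    (\<forall>Q\<in>fibre (fb S) X. Phi S x Q = Q \<longrightarrow> fle (fb S) X Q P')"
  then show "P' = P" using P greatest fle_antisym by blast
qed (use P greatest in blast)

lemma codensity_bisim_eq_omega_meet: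
  assumes "Phi S x (fmeet (fb S) X {(Phi S x ^^ i) (ftop (fb S) X) | i. True})
    = fmeet (fb S) X {(Phi S x ^^ i) (ftop (fb S) X) | i. True}"
  shows "codensity_bisim S X x = fmeet (fb S) X {(Phi S x ^^ i) (ftop (fb S) X) | i. True}"
proof (rule codensity_bisim_eqI[OF _ assms])
  have iterates: "{(Phi S x ^^ i) (ftop (fb S) X) | i. True} \<subseteq> fibre (fb S) X"
    using Phi_iterate_fibre by blast
  then show "fmeet (fb S) X {(Phi S x ^^ i) (ftop (fb S) X) | i. True} \<in> fibre (fb S) X"
    by (rule fmeet_fibre[OF X_Obj])
  fix Q assume Q: "Q \<in> fibre (fb S) X" "Phi S x Q = Q"
  then have "fle (fb S) X Q ((Phi S x ^^ i) (ftop (fb S) X))" for i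
    using postfixpoint_le_Phi_iterate[of Q] fle_refl[OF Q(1)] by simp
  then show "fle (fb S) X Q (fmeet (fb S) X {(Phi S x ^^ i) (ftop (fb S) X) | i. True})"
    using fmeet_greatest[OF X_Obj iterates Q(1)] by blast
qed

lemma reindex_Omu_image_fibre:
  "K \<subseteq> hom (base (fb S)) X (Om S) \<Longrightarrow> (\<lambda>k. reindex (fb S) k (Omu S)) ` K \<subseteq> fibre (fb S) X"
  using reindex_Omu_fibre by blast

lemma family_pred_fibre: "K \<subseteq> hom (base (fb S)) X (Om S) \<Longrightarrow> family_pred S X K \<in> fibre (fb S) X"
  unfolding family_pred_def by (rule fmeet_fibre[OF X_Obj reindex_Omu_image_fibre])

lemma family_pred_antimono:
  "K \<subseteq> K' \<Longrightarrow> K' \<subseteq> hom (base (fb S)) X (Om S) \<Longrightarrow>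
    fle (fb S) X (family_pred S X K') (family_pred S X K)"
  unfolding family_pred_def by (rule fmeet_antimono[OF X_Obj image_mono reindex_Omu_image_fibre])

lemma modal_tests_fibre:
  assumes "K \<subseteq> hom (base (fb S)) X (Om S)"
  shows "modal_tests S K \<subseteq> fibre (fb S) (Bo S X)"
proof
  fix R assume "R \<in> modal_tests S K"
  then obtain k l where "R = modal_pred S l k" "k \<in> K" "l \<in> Lam S"
    unfolding modal_tests_def by blast
  then show "R \<in> fibre (fb S) (Bo S X)" using assms modal_pred_fibre by blast
qed

lemma approximating_le_codensity_lifting:
  assumes K: "approximating S X K" and KP: "fle (fb S) X (family_pred S X K) P"
  shows "fle (fb S) (Bo S X) (fmeet (fb S) (Bo S X) (modal_tests S K)) (codensity_lifting S P)"
proof -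
  have P: "P \<in> fibre (fb S) X" using fle_fibre[OF KP] by blast
  have BX: "Bo S X \<in> Obj (base (fb S))" using functor_Obj[OF B_functor X_Obj] .
  have "fle (fb S) (Bo S X) (fmeet (fb S) (Bo S X) (modal_tests S K))
    (fmeet (fb S) (Bo S X) (codensity_tests S P))"
  proof (rule fmeet_greatest[OF BX codensity_tests_fibre[OF P]])
    show "fmeet (fb S) (Bo S X) (modal_tests S K) \<in> fibre (fb S) (Bo S X)"
      using fmeet_fibre[OF BX modal_tests_fibre[OF approximating_hom[OF K]]] .
    fix R assume "R \<in> codensity_tests S P"
    then obtain l h where R: "R = modal_pred S l (pa (fb S) h)"
      and l: "l \<in> Lam S" and h: "h \<in> hom (tot (fb S)) P (Omu S)"
      unfolding codensity_tests_def by blast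
    obtain h' where h': "h' \<in> hom (tot (fb S)) (family_pred S X K) (Omu S)"
      "pa (fb S) h' = pa (fb S) h"
      using fle_precompose[OF KP h] by blast
    show "fle (fb S) (Bo S X) (fmeet (fb S) (Bo S X) (modal_tests S K)) R"
      using approximatingD[OF K h'(1) l] R h'(2) by simp
  qed
  then show ?thesis using P unfolding codensity_lifting_eq fibre_def by simp
qed

lemma family_pred_le_reindex_modal_tests:
  assumes K: "K \<subseteq> hom (base (fb S)) X (Om S)" and K': "K' \<subseteq> hom (base (fb S)) X (Om S)"
    and closed: "\<And>k l. k \<in> K \<Longrightarrow> l \<in> Lam S \<Longrightarrow>
      Cmp (base (fb S)) (tau S l) (Cmp (base (fb S)) (Ba S k) x) \<in> K'"
  shows "fle (fb S) X (family_pred S X K')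
    (reindex (fb S) x (fmeet (fb S) (Bo S X) (modal_tests S K)))"
proof -
  have tests: "modal_tests S K \<subseteq> fibre (fb S) (Bo S X)" using modal_tests_fibre[OF K] .
  have "fle (fb S) X (family_pred S X K') (fmeet (fb S) X (reindex (fb S) x ` modal_tests S K))"
  proof (rule fmeet_greatest[OF X_Obj])
    show "reindex (fb S) x ` modal_tests S K \<subseteq> fibre (fb S) X"
      using reindex_fibre[OF coalgebra] tests by blast
    show "family_pred S X K' \<in> fibre (fb S) X" using family_pred_fibre[OF K'] .
    fix R assume "R \<in> reindex (fb S) x ` modal_tests S K"
    then obtain k l where R: "R = reindex (fb S) x (modal_pred S l k)"
      and k: "k \<in> K" and l: "l \<in> Lam S"
      unfolding modal_tests_def by blast
    have kX: "k \<in> hom (base (fb S)) X (Om S)" using K k by blast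
    have "R = reindex (fb S) (Cmp (base (fb S)) (Cmp (base (fb S)) (tau S l) (Ba S k)) x) (Omu S)"
      using reindex_Cmp[OF coalgebra modal_test_hom[OF kX l] Omu_fibre] R
      unfolding modal_pred_def by simp
    also have "\<dots> = reindex (fb S) (Cmp (base (fb S)) (tau S l) (Cmp (base (fb S)) (Ba S k) x))
      (Omu S)"
      using category_Cmp_assoc[OF category_base coalgebra functor_hom[OF B_functor kX]
          tau_hom[OF l]]
      by simp
    finally have "R \<in> (\<lambda>k. reindex (fb S) k (Omu S)) ` K'" using closed[OF k l] by blast
    then show "fle (fb S) X (family_pred S X K') R"
      unfolding family_pred_def using fmeet_lower[OF X_Obj reindex_Omu_image_fibre[OF K']] by blast
  qed
  then show ?thesis using reindex_fmeet[OF coalgebra tests] by simp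
qed

lemma approximating_Phi_step:
  assumes K: "approximating S X K" and K': "K' \<subseteq> hom (base (fb S)) X (Om S)"
    and closed: "\<And>k l. k \<in> K \<Longrightarrow> l \<in> Lam S \<Longrightarrow>
      Cmp (base (fb S)) (tau S l) (Cmp (base (fb S)) (Ba S k) x) \<in> K'"
    and KP: "fle (fb S) X (family_pred S X K) P"
  shows "fle (fb S) X (family_pred S X K') (Phi S x P)"
  unfolding Phi_def
  using fle_trans[OF family_pred_le_reindex_modal_tests[OF approximating_hom[OF K] K' closed]
      reindex_mono[OF coalgebra approximating_le_codensity_lifting[OF K KP]]] .

lemma family_pred_semantics_upto_le_Phi_iterate:
  assumes approx: "\<forall>i. approximating S X (semantics_upto S x i)"
  shows "fle (fb S) X (family_pred S X (semantics_upto S x i)) ((Phi S x ^^ i) (ftop (fb S) X))"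
proof (induction i)
  case 0
  show ?case using fle_ftop[OF family_pred_fibre[OF approximating_hom]] approx by simp
next
  case (Suc i)
  from approximating_Phi_step[OF approx[rule_format] approximating_hom[OF approx[rule_format]]
      sem_Mod_semantics_upto Suc]
  show ?case by simp
qed

lemma family_pred_semantics_le_omega_meet:
  assumes approx: "\<forall>i. approximating S X (semantics_upto S x i)"
  shows "fle (fb S) X (family_pred S X {sem S x \<phi> | \<phi>. wf_form S \<phi>})
    (fmeet (fb S) X {(Phi S x ^^ i) (ftop (fb S) X) | i. True})"
proof -
  have hom: "(\<Union>i. semantics_upto S x i) \<subseteq> hom (base (fb S)) X (Om S)"
    using approximating_hom[OF approx[rule_format]] by (rule UN_least)
  have iterates: "{(Phi S x ^^ i) (ftop (fb S) X) | i. True} \<subseteq> fibre (fb S) X"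
    using Phi_iterate_fibre by blast
  have "fle (fb S) X (family_pred S X (\<Union>i. semantics_upto S x i))
    ((Phi S x ^^ i) (ftop (fb S) X))" for i
    using family_pred_antimono[OF UN_upper[OF UNIV_I] hom]
      family_pred_semantics_upto_le_Phi_iterate[OF approx] by (rule fle_trans)
  then show ?thesis
    unfolding semantics_eq_UN_semantics_upto
    by (intro fmeet_greatest[OF X_Obj iterates family_pred_fibre[OF hom]]) blast
qed

end

theorem mainTheorem3:
  fixes S :: "('o,'a,'eo,'ea,'s,'l) situation" and X :: 'o and x :: 'a
  assumes "expressivity_situation S"
    and "x \<in> hom (base (fb S)) X (Bo S X)"
    and "Phi S x (fmeet (fb S) X {(Phi S x ^^ i) (ftop (fb S) X) | i. True})
           = fmeet (fb S) X {(Phi S x ^^ i) (ftop (fb S) X) | i. True}"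
    and "\<forall>i::nat. approximating S X {sem S x \<phi> | \<phi>. wf_form S \<phi> \<and> depth \<phi> \<le> i}"
  shows "fle (fb S) X (fmeet (fb S) X {reindex (fb S) (sem S x \<phi>) (Omu S) | \<phi>. wf_form S \<phi>})
           (codensity_bisim S X x)"
proof -
  interpret expr_coalgebra S X x
    using assms(1,2) by unfold_locales
  have "family_pred S X {sem S x \<phi> | \<phi>. wf_form S \<phi>}
      = fmeet (fb S) X {reindex (fb S) (sem S x \<phi>) (Omu S) | \<phi>. wf_form S \<phi>}"
    unfolding family_pred_def by (rule arg_cong[where f = "fmeet (fb S) X"]) blast
  moreover have "\<forall>i. approximating S X (semantics_upto S x i)"
    using assms(4) unfolding semantics_upto_def .
  ultimately show ?thesis
    using family_pred_semantics_le_omega_meet codensity_bisim_eq_omega_meet[OF assms(3)] by simp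
qed

end
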